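(* Let $H\in\mathbb{R}^{N\times n}$ with $H^TH$ positive definite, written as $H^TH=P\,\mathrm{diag}\{\lambda_1,\dots,\lambda_n\}P^{-1}$ with $P$ orthogonal and $\lambda_1\ge\lambda_2\ge\dots\ge\lambda_n>0$. Let $c\ge0$ be an integer and, for $\bar\mu\ge\lambda_2$, let $R=P\,\mathrm{diag}\{\lambda_{R,1},\dots,\lambda_{R,n}\}P^{-1}$ with $\lambda_{R,i}=\max\{\bar\mu-\lambda_i,0\}$ (so $R$ and $F(R)$ are symmetric positive semidefinite). Define $F(R)=R(H^TH+R)^{-1}$, $F_{ar}(R)=(H^TH)^{-1}F(R)^{c+1}$, $\mathrm{Cond}(R)=\|H^TH+R\|\,\|(H^TH+R)^{-1}\|$ and $\mathrm{Obj}(R)=\|F_{ar}(R)\|\cdot\mathrm{Cond}(R)$. Then: $\mathrm{Obj}(R)$ is a bounded function of $\bar\mu$ and has a global minimum; for $\bar\mu\ge\lambda_1$, $\mathrm{Cond}(R)$ attains its minimal possible value $1$ (maximal generalizability); and if $\lambda_1\ge\bar\mu\ge\lambda_2$, the largest eigenvalue of $H^TH+R$ equals $\lambda_1$, the largest eigenvalue of $H^TH$.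
   Context: $\|\cdot\|$ is the spectral norm. The paper measures the generalizability of the network by the condition number $\mathrm{Cond}(R)$ of $H^TH+R$: a smaller condition number means better generalizability, and "maximal generalizability" means $\mathrm{Cond}(R)$ is minimized. *)

theory Defs
  imports "HOL-Analysis.Analysis"
begin

definition snorm :: "real^'n^'m \<Rightarrow> real" where
  "snorm M = onorm (\<lambda>x. M *v x)"

definition diagm :: "('n::finite \<Rightarrow> real) \<Rightarrow> real^'n^'n" where
  "diagm d = (\<chi> i j. if i = j then d i else 0)"

definition mpow :: "real^'n^'n \<Rightarrow> nat \<Rightarrow> real^'n^'n" where
  "mpow M k = (((**) M) ^^ k) (mat 1)"

definition is_eigenvalue :: "real^'n^'n \<Rightarrow> real \<Rightarrow> bool" where
  "is_eigenvalue M l \<longleftrightarrow> (\<exists>v. v \<noteq> 0 \<and> M *v v = l *s v)"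

definition Rmat :: "real^'n^'n \<Rightarrow> ('n::finite \<Rightarrow> real) \<Rightarrow> real \<Rightarrow> real^'n^'n" where
  "Rmat P lam mu = P ** diagm (\<lambda>i. max (mu - lam i) 0) ** matrix_inv P"

definition Fmat :: "real^'n^'n \<Rightarrow> real^'n^'n \<Rightarrow> real^'n^'n" where
  "Fmat A R = R ** matrix_inv (A + R)"

definition Far :: "nat \<Rightarrow> real^'n^'n \<Rightarrow> real^'n^'n \<Rightarrow> real^'n^'n" where
  "Far c A R = matrix_inv A ** mpow (Fmat A R) (c + 1)"

definition Cond :: "real^'n^'n \<Rightarrow> real^'n^'n \<Rightarrow> real" where
  "Cond A R = snorm (A + R) * snorm (matrix_inv (A + R))"

definition Obj :: "nat \<Rightarrow> real^'n^'n \<Rightarrow> real^'n^'n \<Rightarrow> real" where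
  "Obj c A R = snorm (Far c A R) * Cond A R"

end

(* Everything is diagonalised simultaneously by P. For orthogonal P the matrices
   P diag(d) P^T form a commutative algebra in which sums, products, inverses and powers
   act entrywise on d, whose spectral norm is max |d_i| and whose eigenvalues are the d_i.
   With H^T H = P diag(lambda) P^T and R = P diag(max (mu - lambda_i) 0) P^T, the matrix
   H^T H + R has eigenvalues max mu lambda_i, so Cond and Obj become explicit continuous
   functions of mu. The eigenvalues of F_ar lie in [0, 1/lambda_i] and Cond is at most
   1 + lambda_1/mu, which bounds Obj on [lambda_2, oo). Once mu >= lambda_1 all eigenvalues of
   H^T H + R equal mu, so Cond = 1 and Obj is nondecreasing in mu; hence the minimum of Obj
   over [lambda_2, oo) is its minimum over the compact interval [lambda_2, lambda_1].
   Finally Cond >= 1 always, as ||M|| ||M^-1|| >= ||M M^-1|| = 1. *)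

theory Submission
  imports Defs
begin

lemma diagm_mult: "diagm a ** diagm b = diagm (\<lambda>i. a i * b i)"
  unfolding diagm_def matrix_matrix_mult_def
  by (simp add: vec_eq_iff if_distrib[where f="\<lambda>x. x * _"] cong: if_cong)

lemma diagm_add: "diagm a + diagm b = diagm (\<lambda>i. a i + b i)"
  unfolding diagm_def by (simp add: vec_eq_iff)

lemma diagm_mat_1: "diagm (\<lambda>i. 1) = mat 1"
  unfolding diagm_def mat_def by (simp add: vec_eq_iff)

lemma diagm_mult_vec: "diagm d *v x = (\<chi> i. d i * x $ i)"
  unfolding diagm_def matrix_vector_mult_def
  by (simp add: vec_eq_iff if_distrib[where f="\<lambda>x. x * _"] cong: if_cong)

lemma norm_diagm_mult_vec_le:
  assumes "\<And>i. \<bar>d i\<bar> \<le> M"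
  shows "norm (diagm d *v x) \<le> M * norm x"
proof -
  have "0 \<le> M" using assms[of undefined] by linarith
  have "(norm (diagm d *v x))\<^sup>2 = (\<Sum>i\<in>UNIV. (d i * x $ i)\<^sup>2)"
    unfolding power2_norm_eq_inner by (simp add: inner_vec_def diagm_mult_vec power2_eq_square)
  also have "\<dots> \<le> (\<Sum>i\<in>UNIV. M\<^sup>2 * (x $ i)\<^sup>2)"
  proof (rule sum_mono)
    fix i
    have "\<bar>d i\<bar>\<^sup>2 \<le> M\<^sup>2" using assms[of i] by (intro power_mono) simp_all
    then show "(d i * x $ i)\<^sup>2 \<le> M\<^sup>2 * (x $ i)\<^sup>2"
      by (simp add: power_mult_distrib mult_right_mono)
  qed
  also have "\<dots> = M\<^sup>2 * (x \<bullet> x)"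
    by (simp add: sum_distrib_left inner_vec_def power2_eq_square)
  also have "\<dots> = (M * norm x)\<^sup>2"
    by (simp add: power_mult_distrib power2_norm_eq_inner)
  finally show ?thesis using \<open>0 \<le> M\<close> by (simp add: power2_le_iff_abs_le)
qed

definition sup_abs :: "('i::finite \<Rightarrow> real) \<Rightarrow> real" where
  "sup_abs d = Max (range (\<lambda>i. \<bar>d i\<bar>))"

lemma abs_le_sup_abs: "\<bar>d i\<bar> \<le> sup_abs d"
  unfolding sup_abs_def by (rule Max_ge) auto

lemma sup_abs_le: "(\<And>i. \<bar>d i\<bar> \<le> M) \<Longrightarrow> sup_abs d \<le> M"
  unfolding sup_abs_def by (subst Max_le_iff) auto

lemma sup_abs_attained: obtains i where "sup_abs d = \<bar>d i\<bar>"
proof -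
  have "sup_abs d \<in> range (\<lambda>i. \<bar>d i\<bar>)" unfolding sup_abs_def by (rule Max_in) auto
  then show ?thesis using that by blast
qed

lemma sup_abs_nonneg: "0 \<le> sup_abs d"
  using abs_le_sup_abs[of d undefined] by linarith

lemma sup_abs_mono: "(\<And>i. \<bar>f i\<bar> \<le> \<bar>g i\<bar>) \<Longrightarrow> sup_abs f \<le> sup_abs g"
  by (rule sup_abs_le) (metis abs_le_sup_abs order_trans)

lemma sup_abs_const [simp]: "sup_abs (\<lambda>i. a) = \<bar>a\<bar>"
  unfolding sup_abs_def by simp

lemma continuous_on_Max_image:
  fixes f :: "'i \<Rightarrow> 'a::topological_space \<Rightarrow> real"
  assumes "finite I" "I \<noteq> {}" "\<And>i. i \<in> I \<Longrightarrow> continuous_on K (f i)"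
  shows "continuous_on K (\<lambda>x. Max ((\<lambda>i. f i x) ` I))"
  using assms
proof (induction I rule: finite_ne_induct)
  case (insert a I)
  then have "continuous_on K (\<lambda>x. max (f a x) (Max ((\<lambda>i. f i x) ` I)))"
    by (intro continuous_on_max) auto
  then show ?case using insert by simp
qed simp

lemma continuous_on_sup_abs [continuous_intros]:
  fixes f :: "'i::finite \<Rightarrow> 'a::topological_space \<Rightarrow> real"
  assumes "\<And>i. continuous_on K (f i)"
  shows "continuous_on K (\<lambda>x. sup_abs (\<lambda>i. f i x))"
  unfolding sup_abs_def using assms
  by (intro continuous_on_Max_image continuous_intros) auto

lemma matrix_add_rdistrib: "((A::'a::semiring_1^'n^'m) + B) ** C = A ** C + B ** C"
  by (simp add: vec_eq_iff matrix_matrix_mult_def sum.distrib distrib_right)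

lemma matrix_inv_eq:
  fixes A :: "'a::semiring_1^'n^'n"
  assumes AB: "A ** B = mat 1" and BA: "B ** A = mat 1"
  shows "matrix_inv A = B"
proof -
  have inv: "A ** matrix_inv A = mat 1 \<and> matrix_inv A ** A = mat 1"
    unfolding matrix_inv_def by (rule someI_ex) (use AB BA in blast)
  have "matrix_inv A = matrix_inv A ** (A ** B)" using AB by simp
  also have "\<dots> = (matrix_inv A ** A) ** B" by (rule matrix_mul_assoc)
  also have "\<dots> = B" using inv by simp
  finally show ?thesis .
qed

lemma matrix_mul_matrix_inv:
  fixes A :: "'a::semiring_1^'n^'n"
  assumes "invertible A"
  shows "A ** matrix_inv A = mat 1"
  using assms unfolding invertible_def matrix_inv_def by (metis (mono_tags, lifting) someI_ex)

lemma matrix_inv_orthogonal: "orthogonal_matrix (P :: real^'n^'n) \<Longrightarrow> matrix_inv P = transpose P"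
  by (rule matrix_inv_eq) (simp_all add: orthogonal_matrix_def)

lemma norm_orthogonal_matrix_mult_vec:
  fixes P :: "real^'n^'n"
  assumes "orthogonal_matrix P"
  shows "norm (P *v x) = norm x"
proof -
  have "orthogonal_transformation (\<lambda>x. P *v x)"
    using assms by (simp add: orthogonal_transformation_matrix)
  then show ?thesis by (rule orthogonal_transformation_norm)
qed

lemma snorm_mult_snorm_matrix_inv_ge_1:
  fixes M :: "real^'n^'n"
  assumes "invertible M"
  shows "1 \<le> snorm M * snorm (matrix_inv M)"
proof -
  have "(\<lambda>x. M *v x) \<circ> (\<lambda>x. matrix_inv M *v x) = (\<lambda>x. x)"
    using matrix_mul_matrix_inv[OF assms] by (auto simp: fun_eq_iff matrix_vector_mul_assoc)
  moreover have "onorm ((\<lambda>x. M *v x) \<circ> (\<lambda>x. matrix_inv M *v x)) \<le> snorm M * snorm (matrix_inv M)"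
    unfolding snorm_def by (rule onorm_compose) simp_all
  ultimately show ?thesis by (simp add: onorm_id)
qed

lemma Cond_ge_1: "invertible (A + R) \<Longrightarrow> 1 \<le> Cond A R"
  unfolding Cond_def by (rule snorm_mult_snorm_matrix_inv_ge_1)

definition orth_diag :: "real^'n^'n \<Rightarrow> ('n::finite \<Rightarrow> real) \<Rightarrow> real^'n^'n" where
  "orth_diag P d = P ** diagm d ** transpose P"

lemma orth_diag_add: "orth_diag P a + orth_diag P b = orth_diag P (\<lambda>i. a i + b i)"
  unfolding orth_diag_def by (simp add: diagm_add[symmetric] matrix_add_ldistrib matrix_add_rdistrib)

context
  fixes P :: "real^'n::finite^'n"
  assumes orth: "orthogonal_matrix P"
begin

lemma orth_diag_mult: "orth_diag P a ** orth_diag P b = orth_diag P (\<lambda>i. a i * b i)"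
proof -
  have "orth_diag P a ** orth_diag P b = P ** diagm a ** (transpose P ** P) ** diagm b ** transpose P"
    unfolding orth_diag_def by (simp add: matrix_mul_assoc)
  also have "\<dots> = orth_diag P (\<lambda>i. a i * b i)"
    using orth by (simp add: orthogonal_matrix_def orth_diag_def diagm_mult[symmetric] matrix_mul_assoc)
  finally show ?thesis .
qed

lemma orth_diag_1: "orth_diag P (\<lambda>i. 1) = mat 1"
  using orth by (simp add: orth_diag_def diagm_mat_1 orthogonal_matrix_def)

lemma matrix_inv_orth_diag:
  "(\<And>i. d i \<noteq> 0) \<Longrightarrow> matrix_inv (orth_diag P d) = orth_diag P (\<lambda>i. 1 / d i)"
  by (rule matrix_inv_eq) (simp_all add: orth_diag_mult orth_diag_1)

lemma mpow_orth_diag: "mpow (orth_diag P d) k = orth_diag P (\<lambda>i. d i ^ k)"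
proof (induction k)
  case 0
  show ?case by (simp add: mpow_def orth_diag_1)
next
  case (Suc k)
  have "mpow (orth_diag P d) (Suc k) = orth_diag P d ** mpow (orth_diag P d) k"
    by (simp add: mpow_def)
  then show ?case using Suc by (simp add: orth_diag_mult)
qed

lemma transpose_mult_vec_cancel: "transpose P *v (P *v y) = y" "P *v (transpose P *v y) = y"
  using orth by (simp_all add: matrix_vector_mul_assoc orthogonal_matrix_def del: transpose_matrix_vector)

lemma orth_diag_mult_vec: "orth_diag P d *v (P *v y) = P *v (diagm d *v y)"
  unfolding orth_diag_def
  by (simp only: matrix_vector_mul_assoc[symmetric] transpose_mult_vec_cancel)

lemma snorm_orth_diag: "snorm (orth_diag P d) = sup_abs d"
proof (rule antisym)
  show "snorm (orth_diag P d) \<le> sup_abs d"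
    unfolding snorm_def
  proof (rule onorm_le)
    fix x
    have "norm (orth_diag P d *v x) = norm (diagm d *v (transpose P *v x))"
      by (metis orth_diag_mult_vec transpose_mult_vec_cancel(2) norm_orthogonal_matrix_mult_vec orth)
    also have "\<dots> \<le> sup_abs d * norm (transpose P *v x)"
      by (rule norm_diagm_mult_vec_le) (rule abs_le_sup_abs)
    finally show "norm (orth_diag P d *v x) \<le> sup_abs d * norm x"
      using orth by (simp add: norm_orthogonal_matrix_mult_vec del: transpose_matrix_vector)
  qed
next
  obtain k where k: "sup_abs d = \<bar>d k\<bar>" by (rule sup_abs_attained)
  have "diagm d *v axis k 1 = d k *\<^sub>R axis k 1"
    by (simp add: diagm_mult_vec vec_eq_iff axis_def)
  then have "norm (orth_diag P d *v (P *v axis k 1)) = \<bar>d k\<bar>"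
    using orth by (simp add: orth_diag_mult_vec norm_orthogonal_matrix_mult_vec)
  moreover have "norm (orth_diag P d *v (P *v axis k 1)) / norm (P *v axis k 1) \<le> snorm (orth_diag P d)"
    unfolding snorm_def by (rule le_onorm) simp
  ultimately show "sup_abs d \<le> snorm (orth_diag P d)"
    using k orth by (simp add: norm_orthogonal_matrix_mult_vec)
qed

lemma is_eigenvalue_orth_diag_iff: "is_eigenvalue (orth_diag P d) l \<longleftrightarrow> l \<in> range d"
proof
  assume "is_eigenvalue (orth_diag P d) l"
  then obtain v where "v \<noteq> 0" and v: "orth_diag P d *v v = l *s v"
    unfolding is_eigenvalue_def by blast
  define w where "w = transpose P *v v"
  have "w \<noteq> 0"
    using \<open>v \<noteq> 0\<close> transpose_mult_vec_cancel(2)[of v] unfolding w_def by auto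
  then obtain j where "w $ j \<noteq> 0" by (auto simp: vec_eq_iff)
  have "P *v (diagm d *v w) = orth_diag P d *v v"
    unfolding w_def orth_diag_mult_vec[symmetric] transpose_mult_vec_cancel(2) ..
  also have "\<dots> = P *v (l *s w)"
    unfolding v w_def
    by (simp add: scalar_mult_eq_scaleR matrix_vector_mult_scaleR transpose_mult_vec_cancel
        del: transpose_matrix_vector)
  finally have "P *v (diagm d *v w) = P *v (l *s w)" .
  then have "diagm d *v w = l *s w"
    by (metis transpose_mult_vec_cancel(1))
  then have "d j * w $ j = l * w $ j" by (simp add: diagm_mult_vec vec_eq_iff)
  then have "d j = l" using \<open>w $ j \<noteq> 0\<close> by simp
  then show "l \<in> range d" by (metis rangeI)
next
  assume "l \<in> range d"
  then obtain k where "l = d k" by blast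
  have "diagm d *v axis k 1 = l *s axis k 1"
    using \<open>l = d k\<close> by (simp add: diagm_mult_vec vec_eq_iff axis_def)
  then have "orth_diag P d *v (P *v axis k 1) = l *s (P *v axis k 1)"
    by (simp add: orth_diag_mult_vec scalar_mult_eq_scaleR matrix_vector_mult_scaleR)
  moreover have "P *v axis k 1 \<noteq> 0"
    using orth norm_orthogonal_matrix_mult_vec[of P "axis k 1"] by auto
  ultimately show "is_eigenvalue (orth_diag P d) l"
    unfolding is_eigenvalue_def by blast
qed

end

lemma antitone_enum_bounds:
  fixes e :: "nat \<Rightarrow> 'a" and lam :: "'a \<Rightarrow> real"
  assumes "bij_betw e {..<n} UNIV"
    and "\<And>i j. i \<le> j \<Longrightarrow> j < n \<Longrightarrow> lam (e j) \<le> lam (e i)"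
  shows "lam (e (n - 1)) \<le> lam x" and "lam x \<le> lam (e 0)"
proof -
  obtain j where "j < n" "x = e j"
    using bij_betw_imp_surj_on[OF assms(1)] by (metis UNIV_I imageE lessThan_iff)
  then show "lam (e (n - 1)) \<le> lam x" and "lam x \<le> lam (e 0)"
    using assms(2)[of j "n - 1"] assms(2)[of 0 j] by simp_all
qed

lemma abs_divide_right_mono:
  fixes p q l :: real
  shows "0 \<le> p \<Longrightarrow> p \<le> q \<Longrightarrow> 0 < l \<Longrightarrow> \<bar>p / l\<bar> \<le> \<bar>q / l\<bar>"
  by (simp add: divide_right_mono)

text \<open>\<open>Cond\<close> and \<open>Obj\<close> as functions of \<open>\<mu>\<close> after diagonalisation: the eigenvalues of
  \<open>H\<^sup>TH + R\<close> are \<open>max \<mu> \<lambda>\<^sub>i\<close>, those of \<open>F\<^sub>a\<^sub>r\<close> are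
  \<open>(max (\<mu> - \<lambda>\<^sub>i) 0 / max \<mu> \<lambda>\<^sub>i)\<^sup>c\<^sup>+\<^sup>1 / \<lambda>\<^sub>i\<close>.\<close>
definition cond_spectrum :: "('n::finite \<Rightarrow> real) \<Rightarrow> real \<Rightarrow> real" where
  "cond_spectrum lam mu = sup_abs (\<lambda>i. max mu (lam i)) * sup_abs (\<lambda>i. 1 / max mu (lam i))"

definition obj_spectrum :: "nat \<Rightarrow> ('n::finite \<Rightarrow> real) \<Rightarrow> real \<Rightarrow> real" where
  "obj_spectrum c lam mu =
     sup_abs (\<lambda>i. (max (mu - lam i) 0 / max mu (lam i)) ^ (c + 1) / lam i) * cond_spectrum lam mu"

context
  fixes lam :: "'n::finite \<Rightarrow> real"
  assumes lam_pos: "\<And>i. 0 < lam i"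
begin

lemma cond_spectrum_eq_1:
  assumes "\<And>i. lam i \<le> mu"
  shows "cond_spectrum lam mu = 1"
proof -
  have "0 < mu" using lam_pos assms by (meson less_le_trans)
  moreover have "max mu (lam i) = mu" for i using assms[of i] by simp
  ultimately show ?thesis by (simp add: cond_spectrum_def)
qed

lemma cond_spectrum_le:
  assumes "0 < mu"
  shows "cond_spectrum lam mu \<le> 1 + sup_abs lam / mu"
proof -
  have "sup_abs (\<lambda>i. max mu (lam i)) \<le> mu + sup_abs lam"
  proof (rule sup_abs_le)
    fix i
    have "max mu (lam i) \<le> mu + lam i" using lam_pos[of i] assms by simp
    then show "\<bar>max mu (lam i)\<bar> \<le> mu + sup_abs lam"
      using abs_le_sup_abs[of lam i] lam_pos[of i] assms by simp
  qed
  moreover have "sup_abs (\<lambda>i. 1 / max mu (lam i)) \<le> 1 / mu"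
    by (rule sup_abs_le) (simp add: assms frac_le)
  ultimately have "cond_spectrum lam mu \<le> (mu + sup_abs lam) * (1 / mu)"
    unfolding cond_spectrum_def using assms sup_abs_nonneg[of lam] sup_abs_nonneg
    by (intro mult_mono) auto
  also have "\<dots> = 1 + sup_abs lam / mu" using assms by (simp add: field_simps)
  finally show ?thesis .
qed

lemma far_spectrum_le:
  "sup_abs (\<lambda>i. (max (mu - lam i) 0 / max mu (lam i)) ^ (c + 1) / lam i) \<le> sup_abs (\<lambda>i. 1 / lam i)"
proof (rule sup_abs_mono)
  fix i
  define q where "q = max (mu - lam i) 0 / max mu (lam i)"
  have "0 \<le> q" "q \<le> 1"
    using lam_pos[of i] by (auto simp: q_def max_def)
  then have "0 \<le> q ^ (c + 1)" "q ^ (c + 1) \<le> 1"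
    by (simp_all add: power_le_one del: power_Suc)
  then show "\<bar>q ^ (c + 1) / lam i\<bar> \<le> \<bar>1 / lam i\<bar>"
    using lam_pos[of i] by (rule abs_divide_right_mono)
qed

lemma obj_spectrum_bounded:
  assumes "0 < a"
  shows "\<exists>B. \<forall>mu \<ge> a. \<bar>obj_spectrum c lam mu\<bar> \<le> B"
proof -
  let ?B = "sup_abs (\<lambda>i. 1 / lam i) * (1 + sup_abs lam / a)"
  have "\<bar>obj_spectrum c lam mu\<bar> \<le> ?B" if "a \<le> mu" for mu
  proof -
    have "sup_abs lam / mu \<le> sup_abs lam / a"
      using that assms sup_abs_nonneg[of lam] by (intro divide_left_mono) auto
    then have "cond_spectrum lam mu \<le> 1 + sup_abs lam / a"
      using cond_spectrum_le[of mu] that assms by simp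
    then have "obj_spectrum c lam mu \<le> ?B"
      unfolding obj_spectrum_def
      by (intro mult_mono far_spectrum_le) (simp_all add: cond_spectrum_def sup_abs_nonneg)
    moreover have "0 \<le> obj_spectrum c lam mu"
      by (simp add: obj_spectrum_def cond_spectrum_def sup_abs_nonneg)
    ultimately show ?thesis by simp
  qed
  then show ?thesis by blast
qed

lemma continuous_on_obj_spectrum: "continuous_on S (obj_spectrum c lam)"
proof -
  have "max mu (lam i) \<noteq> 0" "lam i \<noteq> 0" for mu i using lam_pos[of i] by auto
  then show ?thesis
    unfolding obj_spectrum_def[abs_def] cond_spectrum_def by (intro continuous_intros) auto
qed

lemma obj_spectrum_mono:
  assumes "\<And>i. lam i \<le> mu" and "mu \<le> mu'"
  shows "obj_spectrum c lam mu \<le> obj_spectrum c lam mu'"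
proof -
  have obj_eq: "obj_spectrum c lam x = sup_abs (\<lambda>i. (1 - lam i / x) ^ (c + 1) / lam i)"
    if "\<And>i. lam i \<le> x" for x
  proof -
    have "0 < x" using lam_pos that by (meson less_le_trans)
    then have "max (x - lam i) 0 / max x (lam i) = 1 - lam i / x" for i
      using that[of i] by (simp add: diff_divide_distrib)
    then show ?thesis
      unfolding obj_spectrum_def cond_spectrum_eq_1[OF that] by (simp only: mult_1_right)
  qed
  have "0 < mu" using lam_pos assms(1) by (meson less_le_trans)
  show ?thesis
    unfolding obj_eq[OF assms(1)] obj_eq[OF order_trans[OF assms(1) assms(2)]]
  proof (rule sup_abs_mono)
    fix i
    have nonneg: "0 \<le> 1 - lam i / mu" using assms(1)[of i] \<open>0 < mu\<close> by simp
    have "1 - lam i / mu \<le> 1 - lam i / mu'"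
      using lam_pos[of i] \<open>0 < mu\<close> assms(2) by (simp add: frac_le)
    then have "(1 - lam i / mu) ^ (c + 1) \<le> (1 - lam i / mu') ^ (c + 1)"
      using nonneg by (rule power_mono)
    moreover have "0 \<le> (1 - lam i / mu) ^ (c + 1)" using nonneg by (rule zero_le_power)
    ultimately show "\<bar>(1 - lam i / mu) ^ (c + 1) / lam i\<bar> \<le> \<bar>(1 - lam i / mu') ^ (c + 1) / lam i\<bar>"
      using lam_pos[of i] by (intro abs_divide_right_mono)
  qed
qed

text \<open>Beyond every \<open>\<lambda>\<^sub>i\<close> the objective is nondecreasing, so the minimum over \<open>[a, \<infinity>)\<close> is
  its minimum over a compact interval.\<close>
lemma obj_spectrum_attains_min: "\<exists>mu0 \<ge> a. \<forall>mu \<ge> a. obj_spectrum c lam mu0 \<le> obj_spectrum c lam mu"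
proof -
  define b where "b = max a (sup_abs lam)"
  have lam_le_b: "lam i \<le> b" for i
    unfolding b_def by (metis abs_le_sup_abs abs_of_pos lam_pos max.coboundedI2)
  obtain mu0 where mu0: "mu0 \<in> {a..b}" "\<forall>mu \<in> {a..b}. obj_spectrum c lam mu0 \<le> obj_spectrum c lam mu"
    using continuous_attains_inf[of "{a..b}" "obj_spectrum c lam"] continuous_on_obj_spectrum
    by (auto simp: b_def)
  have "obj_spectrum c lam mu0 \<le> obj_spectrum c lam mu" if "a \<le> mu" for mu
  proof (cases "mu \<le> b")
    case False
    then have "obj_spectrum c lam b \<le> obj_spectrum c lam mu"
      by (intro obj_spectrum_mono lam_le_b) simp
    moreover have "b \<in> {a..b}" by (simp add: b_def)
    ultimately show ?thesis using mu0(2) by (meson order_trans)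
  qed (use mu0 that in auto)
  then show ?thesis using mu0(1) by auto
qed

end

context
  fixes P :: "real^'n::finite^'n" and lam :: "'n \<Rightarrow> real"
  assumes orth: "orthogonal_matrix P" and lam_pos: "\<And>i. 0 < lam i"
begin

lemma Rmat_eq_orth_diag: "Rmat P lam mu = orth_diag P (\<lambda>i. max (mu - lam i) 0)"
  unfolding Rmat_def orth_diag_def matrix_inv_orthogonal[OF orth] ..

lemma add_Rmat_orth_diag: "orth_diag P lam + Rmat P lam mu = orth_diag P (\<lambda>i. max mu (lam i))"
  unfolding Rmat_eq_orth_diag orth_diag_add
  by (rule arg_cong[where f="orth_diag P"]) (auto simp: fun_eq_iff)

lemma max_lam_nonzero: "max mu (lam i) \<noteq> 0"
  using lam_pos[of i] by linarith

lemma Cond_Rmat: "Cond (orth_diag P lam) (Rmat P lam mu) = cond_spectrum lam mu"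
  unfolding Cond_def cond_spectrum_def add_Rmat_orth_diag matrix_inv_orth_diag[OF orth max_lam_nonzero]
  by (simp only: snorm_orth_diag[OF orth])

lemma Obj_Rmat: "Obj c (orth_diag P lam) (Rmat P lam mu) = obj_spectrum c lam mu"
proof -
  have "Far c (orth_diag P lam) (Rmat P lam mu)
      = orth_diag P (\<lambda>i. 1 / lam i) **
        mpow (orth_diag P (\<lambda>i. max (mu - lam i) 0) ** orth_diag P (\<lambda>i. 1 / max mu (lam i))) (c + 1)"
    unfolding Far_def Fmat_def add_Rmat_orth_diag unfolding Rmat_eq_orth_diag
    unfolding matrix_inv_orth_diag[OF orth max_lam_nonzero]
      matrix_inv_orth_diag[OF orth lam_pos[THEN less_imp_neq, THEN not_sym]] ..
  also have "\<dots> = orth_diag P (\<lambda>i. (max (mu - lam i) 0 / max mu (lam i)) ^ (c + 1) / lam i)"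
    by (simp add: orth_diag_mult[OF orth] mpow_orth_diag[OF orth] mult.commute)
  finally show ?thesis
    unfolding Obj_def Cond_Rmat obj_spectrum_def by (simp only: snorm_orth_diag[OF orth])
qed

lemma is_eigenvalue_add_Rmat_iff:
  "is_eigenvalue (orth_diag P lam + Rmat P lam mu) l \<longleftrightarrow> (\<exists>i. l = max mu (lam i))"
  unfolding add_Rmat_orth_diag is_eigenvalue_orth_diag_iff[OF orth] by auto

end

theorem proposition2:
  fixes H :: "real^'n^'m"
    and P :: "real^'n^'n"
    and lam :: "'n \<Rightarrow> real"
    and e :: "nat \<Rightarrow> 'n"
    and c :: nat
  assumes card2: "CARD('n) \<ge> 2"
    and enum: "bij_betw e {..<CARD('n)} UNIV"
    and sorted: "\<And>i j. i \<le> j \<Longrightarrow> j < CARD('n) \<Longrightarrow> lam (e j) \<le> lam (e i)"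
    and pos: "lam (e (CARD('n) - 1)) > 0"
    and orth: "orthogonal_matrix P"
    and decomp: "transpose H ** H = P ** diagm lam ** matrix_inv P"
  shows "(\<exists>B. \<forall>mu \<ge> lam (e 1).
            \<bar>Obj c (transpose H ** H) (Rmat P lam mu)\<bar> \<le> B)
       \<and> (\<exists>mu0 \<ge> lam (e 1). \<forall>mu \<ge> lam (e 1).
            Obj c (transpose H ** H) (Rmat P lam mu0) \<le> Obj c (transpose H ** H) (Rmat P lam mu))
       \<and> (\<forall>mu \<ge> lam (e 0). Cond (transpose H ** H) (Rmat P lam mu) = 1)
       \<and> (\<forall>R'. invertible (transpose H ** H + R') \<longrightarrow> 1 \<le> Cond (transpose H ** H) R')
       \<and> (\<forall>mu. lam (e 1) \<le> mu \<and> mu \<le> lam (e 0) \<longrightarrow>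
            is_eigenvalue (transpose H ** H + Rmat P lam mu) (lam (e 0))
          \<and> (\<forall>l. is_eigenvalue (transpose H ** H + Rmat P lam mu) l \<longrightarrow> l \<le> lam (e 0)))"
proof -
  have A: "transpose H ** H = orth_diag P lam"
    using decomp by (simp add: orth_diag_def matrix_inv_orthogonal[OF orth])
  have lam_le: "lam i \<le> lam (e 0)" and lam_pos: "0 < lam i" for i
    using antitone_enum_bounds[where lam = lam, OF enum sorted, of i] pos by simp_all
  have eigenvalues: "is_eigenvalue (orth_diag P lam + Rmat P lam mu) (lam (e 0)) \<and>
      (\<forall>l. is_eigenvalue (orth_diag P lam + Rmat P lam mu) l \<longrightarrow> l \<le> lam (e 0))"
    if "mu \<le> lam (e 0)" for mu
    unfolding is_eigenvalue_add_Rmat_iff[OF orth lam_pos] using that lam_le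
    by (auto intro!: exI[of _ "e 0"])
  have "\<exists>B. \<forall>mu \<ge> lam (e 1). \<bar>obj_spectrum c lam mu\<bar> \<le> B"
    by (rule obj_spectrum_bounded[OF lam_pos lam_pos])
  moreover have "\<exists>mu0 \<ge> lam (e 1). \<forall>mu \<ge> lam (e 1). obj_spectrum c lam mu0 \<le> obj_spectrum c lam mu"
    by (rule obj_spectrum_attains_min[OF lam_pos])
  moreover have "cond_spectrum lam mu = 1" if "lam (e 0) \<le> mu" for mu
    by (rule cond_spectrum_eq_1[OF lam_pos]) (use lam_le that in \<open>rule order_trans\<close>)
  ultimately show ?thesis
    unfolding A Obj_Rmat[OF orth lam_pos] Cond_Rmat[OF orth lam_pos]
    using Cond_ge_1 eigenvalues by blast
qed

end
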